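(* Let $\mathcal{K}'\subseteq\mathcal{K}\subseteq\mathbb{R}^d$ be two convex sets (compact, with nonempty interior). Let $\beta,\gamma$ be reals with $\beta>\gamma>1$ and $\beta>d$, and let $\alpha\ge 2(\gamma+1)\beta^2\sqrt{d}$. Let $G=\mathrm{grid}(\beta\mathcal{K}'\cap\mathcal{K},\alpha)$. Then: (1) for every $x\in\mathcal{K}'$ there exists $x_g\in G$ such that $x_g+\gamma(x_g-x)\in\frac{1}{2\beta}\mathcal{K}'$; (2) for every $x\in\mathcal{K}\setminus\mathcal{K}'$ there exists $x_g\in G$ such that $x_g+\frac{\gamma}{\mu(x,\mathcal{K}')}(x_g-x)\in\frac{1}{2\beta}\mathcal{K}'$.
   Context: For a convex compact set $C\subseteq\mathbb{R}^d$ with nonempty interior, let $\mathcal{E}_C=\{x_0+Vu:\|u\|_2\le1\}$ be its minimum volume enclosing ellipsoid (John ellipsoid), with center $x_0$ and $V$ invertible. The Minkowski distance of $x\in\mathbb{R}^d$ to $C$ is $\mu(x,C)=d\sqrt{(x-x_0)^\top(VV^\top)^{-1}(x-x_0)}$ (i.e. the gauge of $x-x_0$ with respect to the ellipsoid $\mathcal{E}_C$ shrunk by factor $1/d$ about its center). For $b>0$, the scaled set is $bC=\{y\in\mathbb{R}^d:\mu(y,C)\le b\}$. The grid $\mathrm{grid}(C,\alpha)$ is constructed as follows: let $\mathcal{E}'$ be the minimum volume enclosing ellipsoid of $C$, $\mathcal{E}=\frac1d\mathcal{E}'$ (shrunk about its center), let $A$ be the (affine) invertible transformation mapping $\mathcal{E}$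 onto the Euclidean ball $B_\alpha(0)$ of radius $\alpha$ centered at $0$, and output $\mathrm{grid}(C,\alpha)=A^{-1}(\mathbb{Z}^d)\cap C$. *)

theory Defs
  imports "HOL-Analysis.Analysis"
begin

definition ellipsoid :: "real^'n \<Rightarrow> real^'n^'n \<Rightarrow> (real^'n) set" where
  "ellipsoid x0 V = {x0 + V *v u | u. norm u \<le> 1}"

definition is_mvee :: "(real^'n) set \<Rightarrow> real^'n \<Rightarrow> real^'n^'n \<Rightarrow> bool" where
  "is_mvee C x0 V \<longleftrightarrow> invertible V \<and> C \<subseteq> ellipsoid x0 V \<and>
     (\<forall>x1 W. invertible W \<and> C \<subseteq> ellipsoid x1 W \<longrightarrow>
        measure lebesgue (ellipsoid x0 V) \<le> measure lebesgue (ellipsoid x1 W))"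

definition john_center :: "(real^'n) set \<Rightarrow> real^'n" where
  "john_center C = fst (SOME p. is_mvee C (fst p) (snd p))"

definition john_matrix :: "(real^'n) set \<Rightarrow> real^'n^'n" where
  "john_matrix C = snd (SOME p. is_mvee C (fst p) (snd p))"

text \<open>Minkowski distance: d * sqrt((x-x0)^T (V V^T)^{-1} (x-x0)) = d * norm (V^{-1}(x-x0)).\<close>
definition mink_dist :: "real^'n::finite \<Rightarrow> (real^'n) set \<Rightarrow> real" where
  "mink_dist x C = real CARD('n) * norm (matrix_inv (john_matrix C) *v (x - john_center C))"

definition scaled_set :: "real \<Rightarrow> (real^'n) set \<Rightarrow> (real^'n) set" where
  "scaled_set b C = {y. mink_dist y C \<le> b}"

definition int_lattice :: "(real^'n) set" where
  "int_lattice = {z. \<forall>i. z $ i \<in> \<int>}"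

text \<open>G is a possible output of grid(C, alpha): for some John ellipsoid representation
  (x0,V) of C and some invertible affine map A y = M y + c mapping the shrunk
  ellipsoid (1/d) E' onto the closed ball of radius alpha, G = A^{-1}(Z^d) \<inter> C.\<close>
definition is_grid :: "(real^'n::finite) set \<Rightarrow> real \<Rightarrow> (real^'n) set \<Rightarrow> bool" where
  "is_grid C \<alpha> G \<longleftrightarrow> (\<exists>x0 V M c. is_mvee C x0 V \<and> invertible M \<and>
     (\<lambda>y. (M::real^'n^'n) *v y + c) ` ellipsoid x0 ((1 / real CARD('n)) *\<^sub>R (V::real^'n^'n)) = cball 0 \<alpha> \<and>
     G = {y \<in> C. M *v y + c \<in> int_lattice})"

end

theory Submission
  imports Defs
begin

text \<open>Minimality of volume forces the John ellipsoid \<open>E\<close> of a convex body \<open>C\<close>, shrunk by the factor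
  \<open>3/(4d)\<close> about its centre, to lie inside \<open>C\<close>: otherwise a supporting hyperplane cuts \<open>E\<close> in a cap
  containing \<open>C\<close>, and such a cap fits into an ellipsoid of smaller volume.

  For \<open>K'\<close> this makes \<open>\<mu>(\<cdot>, K')\<close> a norm around the John centre \<open>c\<close> in which \<open>K'\<close> lies between
  the balls of radii \<open>3/4\<close> and \<open>d\<close>.  For \<open>C = \<beta>K' \<inter> K\<close> it shows that the inverse of the grid map
  stretches Euclidean lengths by at most \<open>4\<beta>/(3\<alpha>)\<close> in this norm; since rounding to \<open>\<int>\<^sup>d\<close> moves a
  point by at most \<open>\<surd>d/2\<close>, every point has a grid point within \<open>\<mu>\<close>-distance \<open>1/(3\<beta>(\<gamma>+1))\<close>.

  Given \<open>x\<close> and a ratio \<open>t\<close>, choose a target \<open>s\<^sub>0\<close> near \<open>c\<close> and a grid point \<open>y\<close> near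
  \<open>(s\<^sub>0 + t x)/(1 + t)\<close>.  Then \<open>y + t (y - x)\<close> is near \<open>s\<^sub>0\<close>, hence in \<open>K'/(2\<beta>)\<close>, and \<open>y\<close>, a
  convex combination of that point and \<open>x\<close>, lies in \<open>C\<close> and thus in the grid.\<close>

section \<open>Volumes of linear images and ellipsoids\<close>

lemma measure_swap_coordinates_cbox:
  fixes a b :: "real^'n"
  shows "measure lebesgue ((\<lambda>x. \<chi> i. x $ Transposition.transpose m n i) ` cbox a b)
       = measure lebesgue (cbox a b)"
proof (cases "cbox a b = {}")
  case False
  let ?h = "\<lambda>v::real^'n. \<chi> i. v $ Transposition.transpose m n i"
  have eq: "?h ` cbox a b = cbox (?h a) (?h b)"
    by (auto simp: image_iff lambda_swap_Galois mem_box_cart) (metis transpose_involutory)+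
  then have "cbox (?h a) (?h b) \<noteq> {}"
    using False by blast
  then show ?thesis
    using False prod.permute [OF permutes_swap_id, where S=UNIV and g="\<lambda>i. (b - a)$i", symmetric]
    by (simp add: eq content_cbox_cart)
qed simp

lemma measure_shear_cbox:
  fixes a b :: "real^'n"
  assumes "m \<noteq> n"
  shows "measure lebesgue ((\<lambda>x. \<chi> i. if i = m then x$m + x$n else x$i) ` cbox a b)
       = measure lebesgue (cbox a b)"
proof (cases "cbox a b = {}")
  case False
  let ?f = "\<lambda>x::real^'n. \<chi> i. if i = m then x$m + x$n else x$i"
  define v :: "real^'n" where "v = (\<chi> i. if i = n then - a $ n else 0)"
  have lin: "linear ?f"
    by (rule linearI) (auto simp: algebra_simps vec_eq_iff)
  \<comment> \<open>translating the box so that its n-th lower corner is 0 makes the library lemma applicable\<close>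
  have "?f ` cbox a b = (\<lambda>x. x - ?f v) ` ?f ` cbox (v + a) (v + b)"
    by (simp add: cbox_translation image_image linear_add [OF lin])
  then have "measure lebesgue (?f ` cbox a b) = measure lebesgue (?f ` cbox (v + a) (v + b))"
    by (simp add: measure_translation_subtract)
  also have "\<dots> = measure lebesgue (cbox (v + a) (v + b))"
    using False assms by (subst measure_shear_interval) (auto simp: v_def cbox_translation)
  also have "\<dots> = measure lebesgue (cbox a b)"
    by (simp only: cbox_translation measure_translation)
  finally show ?thesis .
qed simp

text \<open>The library's \<open>measure_linear_image\<close> is stated only for well-ordered index types;
  the same induction over elementary linear maps works for any finite index type.\<close>

lemma measure_linear_image_cart:
  fixes f :: "real^'n \<Rightarrow> real^'n"
  assumes "linear f" "S \<in> lmeasurable"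
  shows "f ` S \<in> lmeasurable \<and> measure lebesgue (f ` S) = \<bar>det (matrix f)\<bar> * measure lebesgue S"
proof -
  let ?P = "\<lambda>f::real^'n \<Rightarrow> real^'n. \<forall>S \<in> lmeasurable.
    f ` S \<in> lmeasurable \<and> measure lebesgue (f ` S) = \<bar>det (matrix f)\<bar> * measure lebesgue S"
  have unimodular: "?P f"
    if lin: "linear f" and det: "\<bar>det (matrix f)\<bar> = 1"
      and box: "\<And>a b. measure lebesgue (f ` cbox a b) = measure lebesgue (cbox a b)" for f
  proof
    fix S :: "(real^'n) set"
    assume "S \<in> lmeasurable"
    with measure_linear_sufficient [OF lin this, of 1] box det
    show "f ` S \<in> lmeasurable \<and> measure lebesgue (f ` S) = \<bar>det (matrix f)\<bar> * measure lebesgue S"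
      by simp
  qed
  have "?P f"
  proof (rule induct_linear_elementary [OF \<open>linear f\<close>])
    fix f g :: "real^'n \<Rightarrow> real^'n"
    assume "linear f" "linear g" and f: "?P f" and g: "?P g"
    show "?P (f \<circ> g)"
    proof
      fix S :: "(real^'n) set"
      assume S: "S \<in> lmeasurable"
      with g have gS: "g ` S \<in> lmeasurable"
        by blast
      show "(f \<circ> g) ` S \<in> lmeasurable \<and>
          measure lebesgue ((f \<circ> g) ` S) = \<bar>det (matrix (f \<circ> g))\<bar> * measure lebesgue S"
        using f [rule_format, OF gS] g [rule_format, OF S] matrix_compose [OF \<open>linear g\<close> \<open>linear f\<close>]
        by (simp add: o_def image_comp abs_mult det_mul)
    qed
  next
    fix f :: "real^'n \<Rightarrow> real^'n" and i
    assume lin: "linear f" and "\<And>x. f x $ i = 0"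
    then have "\<not> inj f"
      by (metis (full_types) linear_injective_imp_surjective one_neq_zero surjE vec_component)
    then have "det (matrix f) = 0" "\<And>S. negligible (f ` S)"
      using det_nz_iff_inj [OF lin] negligible_linear_singular_image [OF lin] by auto
    then show "?P f"
      by (simp add: negligible_imp_measure0 negligible_iff_measure)
  next
    fix c :: "'n \<Rightarrow> real"
    show "?P (\<lambda>x. \<chi> i. c i * x $ i)"
      by (simp add: measurable_stretch measure_stretch matrix_def axis_def det_diagonal)
  next
    fix m n :: 'n
    assume "m \<noteq> n"
    let ?h = "\<lambda>v::real^'n. \<chi> i. v $ Transposition.transpose m n i"
    have "(\<chi> i j. if Transposition.transpose m n i = j then 1 else 0)
        = (\<chi> i j. if j = Transposition.transpose m n i then 1 else (0::real))"
      by (auto intro!: Cart_lambda_cong)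
    then have "matrix ?h = transpose (\<chi> i j. mat 1 $ i $ Transposition.transpose m n j)"
      by (auto simp: matrix_eq transpose_def axis_def mat_def matrix_def)
    then have "\<bar>det (matrix ?h)\<bar> = 1"
      by (simp add: det_permute_columns permutes_swap_id sign_swap_id abs_mult)
    moreover have "linear ?h"
      by (rule linearI) (simp_all add: plus_vec_def scaleR_vec_def)
    ultimately show "?P ?h"
      by (intro unimodular) (simp_all only: measure_swap_coordinates_cbox)
  next
    fix m n :: 'n
    assume "m \<noteq> n"
    let ?h = "\<lambda>v::real^'n. \<chi> i. if i = m then v $ m + v $ n else v $ i"
    have "matrix ?h = (\<chi> k. if k = m then row m (mat 1) + 1 *s row n (mat 1) else row k (mat 1))"
      by (auto simp: matrix_def axis_def row_def mat_def vec_eq_iff)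
    then have "det (matrix ?h) = 1"
      using det_row_operation [OF \<open>m \<noteq> n\<close>, of "mat 1" 1] by simp
    moreover have "linear ?h"
      by (rule linearI) (auto simp: algebra_simps vec_eq_iff)
    ultimately show "?P ?h"
      by (intro unimodular) (simp_all add: measure_shear_cbox [OF \<open>m \<noteq> n\<close>])
  qed
  with assms show ?thesis
    by blast
qed

lemma matrix_inv_right: "invertible A \<Longrightarrow> A ** matrix_inv A = mat 1"
  and matrix_inv_left: "invertible A \<Longrightarrow> matrix_inv A ** A = mat 1"
  for A :: "real^'n^'n"
  unfolding invertible_def matrix_inv_def by (metis (mono_tags, lifting) someI_ex)+

lemma matrix_inv_cancel:
  fixes A :: "real^'n^'n"
  assumes "invertible A"
  shows "A *v (matrix_inv A *v x) = x" "matrix_inv A *v (A *v x) = x"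
  using matrix_inv_right [OF assms] matrix_inv_left [OF assms]
  by (simp_all add: matrix_vector_mul_assoc)

lemma invertible_matrix_inv: "invertible A \<Longrightarrow> invertible (matrix_inv A)"
  for A :: "real^'n^'n"
  using matrix_inv_right matrix_inv_left unfolding invertible_def by blast

lemma matrix_inv_matrix_inv: "invertible A \<Longrightarrow> matrix_inv (matrix_inv A) = A"
  for A :: "real^'n^'n"
  by (metis invertible_matrix_inv matrix_inv_left matrix_inv_right matrix_mul_assoc
      matrix_mul_lid matrix_mul_rid)

lemma det_matrix_inv:
  fixes A :: "real^'n^'n"
  assumes "invertible A"
  shows "det (matrix_inv A) = 1 / det A"
proof -
  have "det A * det (matrix_inv A) = 1"
    using matrix_inv_right [OF assms] by (simp flip: det_mul)
  moreover from this have "det A \<noteq> 0"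
    by auto
  ultimately show ?thesis
    by (simp add: field_simps)
qed

lemma ellipsoid_eq_image: "ellipsoid x0 V = (\<lambda>u. x0 + V *v u) ` cball 0 1"
  unfolding ellipsoid_def by auto

lemma mem_ellipsoid_iff:
  assumes "invertible V"
  shows "y \<in> ellipsoid x0 V \<longleftrightarrow> norm (matrix_inv V *v (y - x0)) \<le> 1"
  unfolding ellipsoid_def using matrix_inv_cancel [OF assms]
  by (auto intro!: exI [of _ "matrix_inv V *v (y - x0)"] simp: algebra_simps)

lemma affine_image_ellipsoid:
  "(\<lambda>w. x0 + V *v w) ` ellipsoid c D = ellipsoid (x0 + V *v c) (V ** D)"
  by (simp add: ellipsoid_eq_image image_image matrix_vector_right_distrib
      matrix_vector_mul_assoc add.assoc)

lemma measure_ellipsoid: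
  "measure lebesgue (ellipsoid x0 V) = \<bar>det V\<bar> * measure lebesgue (cball (0::real^'n) 1)"
  for V :: "real^'n^'n"
proof -
  have "ellipsoid x0 V = (+) x0 ` (*v) V ` cball 0 1"
    by (auto simp: ellipsoid_eq_image)
  then show ?thesis
    using measure_linear_image_cart [of "(*v) V" "cball 0 1"]
    by (simp add: measure_translation lmeasurable_cball matrix_vector_mul_linear)
qed

lemma measure_ellipsoid_le_iff:
  fixes V W :: "real^'n^'n"
  shows "measure lebesgue (ellipsoid x0 V) \<le> measure lebesgue (ellipsoid x1 W) \<longleftrightarrow> \<bar>det V\<bar> \<le> \<bar>det W\<bar>"
proof -
  have "measure lebesgue (cball (0::real^'n) 1) > 0"
    by (simp add: content_cball_gt_0_iff)
  then show ?thesis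
    by (simp add: measure_ellipsoid)
qed

section \<open>Cutting a cap off the unit ball\<close>

lemma shrink_stretch_polynomial_ineq:
  fixes x :: real
  assumes "0 \<le> x" "x \<le> 1"
  shows "(1 - x/32)^2 * (1 - x^2/8)^2 \<le> 1 - x * (1 + 3*x) / 16"
proof -
  have "1 - x * (1 + 3*x) / 16 - (1 - x/32)^2 * (1 - x^2/8)^2
      = x^2 * (63/1024) - x^3/64 - x^4 * (63/4096) + x^5/1024 - x^6/65536"
    by (simp add: field_simps eval_nat_numeral)
  moreover have "x^3 \<le> x^2" "x^4 \<le> x^2" "x^6 \<le> x^2" "0 \<le> x^5" "0 \<le> x^2"
    using assms by (auto intro!: power_decreasing)
  ultimately show ?thesis
    by linarith
qed

text \<open>With \<open>x = 1/(4d-3)\<close> the three parameters used below are the shift \<open>x/32\<close> of the centre, the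
  stretch \<open>1/(1 - x\<^sup>2/8)\<close> orthogonal to the cut direction and the cut height \<open>3x/(1+3x) = 3/(4d)\<close>.\<close>

lemma cap_ellipsoid_ineq_top:
  fixes x :: real
  assumes x: "0 < x" "x \<le> 1"
  defines "h \<equiv> 3*x / (1 + 3*x)"
  shows "(1 - h) * (1 - x^2/8)^2 \<le> (1 - h - x/16) / (1 - x/32)^2"
proof -
  have h: "(1 - h) * (1 + 3*x) = 1"
    using x by (simp add: h_def field_simps)
  have "(1 - h) * ((1 - x/32)^2 * (1 - x^2/8)^2) \<le> (1 - h) * (1 - x * (1 + 3*x) / 16)"
    using shrink_stretch_polynomial_ineq [of x] x h
    by (intro mult_left_mono) (auto simp: h_def field_simps)
  also have "\<dots> = (1 - h) - ((1 - h) * (1 + 3*x)) * x / 16"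
    by (simp add: algebra_simps)
  also have "\<dots> = 1 - h - x/16"
    using h by simp
  finally have "(1 - h) * (1 - x^2/8)^2 * (1 - x/32)^2 \<le> 1 - h - x/16"
    by (simp add: ac_simps)
  moreover have "0 < (1 - x/32)^2"
    using x by simp
  ultimately show ?thesis
    by (simp add: pos_le_divide_eq)
qed

lemma cap_ellipsoid_ineq:
  fixes x s z :: real
  assumes x: "0 < x" "x \<le> 1" and s: "-1 \<le> s" "s \<le> 3*x / (1 + 3*x)" and z: "z \<le> 1"
  shows "(z - s^2) * (1 - x^2/8)^2 + (s + x/32)^2 / (1 - x/32)^2 \<le> 1"
proof -
  define t h where "t = x/32" and "h = 3*x / (1 + 3*x)"
  define A B where "A = 1 / (1 - t)^2" and "B = (1 - x^2/8)^2"
  have t: "0 < t" "t < 1"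
    using x by (simp_all add: t_def)
  have "x^2 \<le> 1"
    using x by (simp add: power_le_one)
  then have B: "0 \<le> B" "B \<le> 1"
    unfolding B_def by (auto intro!: power_le_one)
  have aA: "(1 - t)^2 * A = 1"
    using t by (simp add: A_def)
  have A: "1 \<le> A"
    using t by (simp add: A_def power_le_one)
  have "(1 - h) * B \<le> (1 - h - 2 * t) * A"
    using cap_ellipsoid_ineq_top [OF x] by (simp add: A_def B_def h_def t_def)
  moreover have "(s - h) * (A - B) \<le> 0"
    using s(2) A B unfolding h_def by (intro mult_nonpos_nonneg) linarith+
  moreover have "(s + 2*t - 1) * A + (1 - s) * B
      = (1 - h) * B - (1 - h - 2 * t) * A + (s - h) * (A - B)"
    by (simp add: algebra_simps)
  ultimately have "(s + 2*t - 1) * A + (1 - s) * B \<le> 0"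
    by linarith
  then have "(s + 1) * ((s + 2*t - 1) * A + (1 - s) * B) \<le> 0"
    using s(1) by (intro mult_nonneg_nonpos) auto
  moreover have "(1 - s^2) * B + (s + t)^2 * A - 1 = (s + 1) * ((s + 2*t - 1) * A + (1 - s) * B)"
    using aA by (simp add: algebra_simps power2_eq_square)
  moreover have "(z - s^2) * B \<le> (1 - s^2) * B"
    using z B by (intro mult_right_mono) auto
  ultimately have "(z - s^2) * B + (s + t)^2 * A \<le> 1"
    by linarith
  moreover have "(s + x/32)^2 / (1 - x/32)^2 = (s + t)^2 * A"
    by (simp add: A_def t_def)
  ultimately show ?thesis
    by (simp add: B_def)
qed

lemma shrink_stretch_det_less_one:
  fixes x :: real
  assumes "0 < x" "x \<le> 1" "real k * x < 1/4"
  shows "(1 - x/32) * (1 / (1 - x^2/8)) ^ k < 1"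
proof -
  define d where "d = x^2/8"
  have d: "0 < d" "d < 1"
    using assms power_le_one [of x 2] by (auto simp: d_def)
  have "real k * d < x/32"
    using assms by (simp add: d_def power2_eq_square field_simps)
  moreover have "1 - real k * d \<le> (1 - d) ^ k"
    using Bernoulli_inequality [of "- d" k] d by simp
  ultimately have "1 - x/32 < (1 - d) ^ k"
    by linarith
  then show ?thesis
    using d by (simp add: power_one_over divide_less_eq_1_pos flip: d_def)
qed

lemma matrix_stretch_along_unit:
  fixes u :: "real^'n"
  assumes "norm u = 1"
  obtains D :: "real^'n^'n"
  where "\<And>w. D *v w = b *\<^sub>R w + ((a - b) * (u \<bullet> w)) *\<^sub>R u"
    and "det D = a * b ^ (CARD('n) - 1)"
proof -
  fix k :: 'n
  obtain Q where Q: "orthogonal_matrix Q" "Q *v axis k 1 = u"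
    using orthogonal_matrix_exists_basis [OF assms] by blast
  define \<Lambda> :: "real^'n^'n" where "\<Lambda> = (\<chi> i j. if i = j then if i = k then a else b else 0)"
  have "(\<Lambda> *v v) $ i = (\<Sum>j\<in>UNIV. if i = j then (if i = k then a else b) * v $ j else 0)" for v i
    unfolding \<Lambda>_def matrix_vector_mult_def by (simp only: vec_lambda_beta) (rule sum.cong, auto)
  then have \<Lambda>: "\<Lambda> *v v = b *\<^sub>R v + ((a - b) * v $ k) *\<^sub>R axis k 1" for v
    by (auto simp: vec_eq_iff axis_def algebra_simps)
  have "(transpose Q *v w) $ k = u \<bullet> w" for w
    using dot_lmul_matrix [of w Q "axis k 1"] Q(2) by (simp add: cart_eq_inner_axis inner_commute)
  moreover have "Q *v (transpose Q *v w) = w" for w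
    using Q(1) unfolding orthogonal_matrix_def
    by (simp only: matrix_vector_mul_assoc matrix_vector_mul_lid)
  ultimately have "(Q ** \<Lambda> ** transpose Q) *v w = b *\<^sub>R w + ((a - b) * (u \<bullet> w)) *\<^sub>R u" for w
    by (simp add: \<Lambda> Q(2) matrix_vector_mul_assoc [symmetric] matrix_vector_right_distrib
        matrix_vector_mult_scaleR)
  moreover have "det (Q ** \<Lambda> ** transpose Q) = a * b ^ (CARD('n) - 1)"
  proof -
    have "det Q * det Q = 1"
      using det_orthogonal_matrix [OF Q(1)] by auto
    moreover have "det \<Lambda> = a * (\<Prod>i\<in>UNIV - {k}. b)"
      by (simp add: \<Lambda>_def det_diagonal prod.remove [of UNIV k])
    ultimately show ?thesis
      by (simp add: det_mul card_Diff_singleton mult_ac)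
  qed
  ultimately show ?thesis
    using that by blast
qed

lemma unit_ball_cap_subset_ellipsoid:
  fixes u :: "real^'n" and x :: real
  assumes u: "norm u = 1" and x: "0 < x" "x \<le> 1"
    and D: "\<And>w. D *v w = (1 / (1 - x^2/8)) *\<^sub>R w + ((1 - x/32 - 1 / (1 - x^2/8)) * (u \<bullet> w)) *\<^sub>R u"
  shows "{z. norm z \<le> 1 \<and> u \<bullet> z \<le> 3*x / (1 + 3*x)} \<subseteq> ellipsoid (- (x/32) *\<^sub>R u) D"
proof
  fix z :: "real^'n"
  assume "z \<in> {z. norm z \<le> 1 \<and> u \<bullet> z \<le> 3*x / (1 + 3*x)}"
  then have z: "norm z \<le> 1" "u \<bullet> z \<le> 3*x / (1 + 3*x)"
    by auto
  define t a b s where "t = x/32" and "a = 1 - t" and "b = 1 - x^2/8" and "s = u \<bullet> z"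
  have ab: "0 < a" "0 < b"
    using x power_le_one [of x 2] by (auto simp: a_def b_def t_def)
  have uu: "u \<bullet> u = 1"
    using u by (simp add: dot_square_norm)
  have "\<bar>s\<bar> \<le> 1"
    using Cauchy_Schwarz_ineq2 [of u z] u z by (simp add: s_def)
  define w where "w = b *\<^sub>R z + ((s + t) / a - b * s) *\<^sub>R u"
  have "u \<bullet> w = (s + t) / a"
    by (simp add: w_def inner_add_right s_def uu)
  then have "D *v w = z + ((1/b) * ((s + t) / a - b * s) + (a - 1/b) * ((s + t) / a)) *\<^sub>R u"
    using ab by (simp add: D w_def a_def b_def t_def scaleR_add_left scaleR_add_right)
  also have "(1/b) * ((s + t) / a - b * s) + (a - 1/b) * ((s + t) / a) = t"
    using ab by (simp add: field_simps)
  finally have "z = - t *\<^sub>R u + D *v w"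
    by simp
  moreover have "(norm w)^2 \<le> 1"
  proof -
    have zz: "z \<bullet> z = norm z * norm z"
      by (simp add: dot_square_norm power2_eq_square)
    have "(norm w)^2 = w \<bullet> w"
      by (simp add: dot_square_norm)
    also have "\<dots> = ((norm z)^2 - s^2) * b^2 + (s + t)^2 / a^2"
      by (simp add: w_def inner_add_left inner_add_right inner_commute [of z u] s_def [symmetric]
          uu zz power2_eq_square algebra_simps add_divide_distrib diff_divide_distrib)
    also have "\<dots> \<le> 1"
      using cap_ellipsoid_ineq [of x s "(norm z)^2"] x z \<open>\<bar>s\<bar> \<le> 1\<close>
      by (simp add: a_def b_def t_def s_def abs_le_iff power_le_one)
    finally show ?thesis .
  qed
  ultimately show "z \<in> ellipsoid (- (x/32) *\<^sub>R u) D"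
    unfolding ellipsoid_def t_def by (auto simp: power_le_one_iff)
qed

lemma unit_ball_cap_in_smaller_ellipsoid:
  fixes u :: "real^'n"
  assumes "norm u = 1"
  obtains c D where "invertible D" "\<bar>det D\<bar> < 1"
    and "{z. norm z \<le> 1 \<and> u \<bullet> z \<le> 3 / (4 * real CARD('n))} \<subseteq> ellipsoid c D"
proof -
  define N where "N = CARD('n)"
  have N: "1 \<le> real N"
    by (simp add: N_def Suc_le_eq)
  define x where "x = 1 / (4 * real N - 3)"
  have x: "0 < x" "x \<le> 1"
    using N by (simp_all add: x_def field_simps)
  have b: "0 < 1 - x^2/8"
    using x power_le_one [of x 2] by simp
  obtain D :: "real^'n^'n"
    where D: "\<And>w. D *v w = (1 / (1 - x^2/8)) *\<^sub>R w + ((1 - x/32 - 1 / (1 - x^2/8)) * (u \<bullet> w)) *\<^sub>R u"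
      and detD: "det D = (1 - x/32) * (1 / (1 - x^2/8)) ^ (N - 1)"
    using matrix_stretch_along_unit [OF assms] unfolding N_def by metis
  have "real (N - 1) * x < 1/4"
    using N by (simp add: x_def of_nat_diff field_simps)
  then have "\<bar>det D\<bar> < 1"
    using shrink_stretch_det_less_one [OF x] x b by (simp add: detD)
  moreover have "invertible D"
    using x b by (simp add: invertible_det_nz detD)
  moreover have "3*x / (1 + 3*x) = 3 / (4 * real N)"
    using N by (simp add: x_def field_simps)
  ultimately show ?thesis
    using that unit_ball_cap_subset_ellipsoid [OF assms x D] unfolding N_def by auto
qed

section \<open>Minimum volume enclosing ellipsoids\<close>

lemma separating_unit_vector:
  fixes S :: "'a::euclidean_space set"
  assumes "convex S" "closed S" "z \<notin> S"
  obtains u where "norm u = 1" "\<And>w. w \<in> S \<Longrightarrow> u \<bullet> w < u \<bullet> z"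
proof -
  obtain a b where ab: "a \<bullet> z < b" "\<And>w. w \<in> S \<Longrightarrow> a \<bullet> w > b"
    using separating_hyperplane_closed_point [OF assms] by blast
  show ?thesis
  proof (cases "a = 0")
    case True
    then have "S = {}"
      using ab by force
    obtain e :: 'a where "e \<in> Basis"
      using nonempty_Basis by blast
    then show ?thesis
      using that [of e] \<open>S = {}\<close> by simp
  next
    case False
    show ?thesis
    proof (rule that [of "- (1 / norm a) *\<^sub>R a"])
      show "norm (- (1 / norm a) *\<^sub>R a) = 1"
        using False by simp
      show "(- (1 / norm a) *\<^sub>R a) \<bullet> w < (- (1 / norm a) *\<^sub>R a) \<bullet> z" if "w \<in> S" for w
      proof -
        have "a \<bullet> z < a \<bullet> w"
          using ab that by force
        then show ?thesis
          using False by (simp add: divide_strict_right_mono)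
      qed
    qed
  qed
qed

lemma smaller_ellipsoid_if_cap:
  fixes C :: "(real^'n) set"
  assumes V: "invertible V" and CV: "C \<subseteq> ellipsoid x0 V" and u: "norm u = 1"
    and cap: "\<And>x. x \<in> C \<Longrightarrow> u \<bullet> (matrix_inv V *v (x - x0)) \<le> 3 / (4 * real CARD('n))"
  obtains x1 W where "invertible W" "C \<subseteq> ellipsoid x1 W" "\<bar>det W\<bar> < \<bar>det V\<bar>"
proof -
  obtain c D where D: "invertible D" "\<bar>det D\<bar> < 1"
    and cap_D: "{w. norm w \<le> 1 \<and> u \<bullet> w \<le> 3 / (4 * real CARD('n))} \<subseteq> ellipsoid c D"
    using unit_ball_cap_in_smaller_ellipsoid [OF u] by blast
  have "C \<subseteq> (\<lambda>w. x0 + V *v w) ` ellipsoid c D"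
  proof
    fix x
    assume "x \<in> C"
    then have "norm (matrix_inv V *v (x - x0)) \<le> 1"
      using CV by (auto simp: mem_ellipsoid_iff [OF V])
    with cap [OF \<open>x \<in> C\<close>] have "matrix_inv V *v (x - x0) \<in> ellipsoid c D"
      using cap_D by blast
    moreover have "x = x0 + V *v (matrix_inv V *v (x - x0))"
      using matrix_inv_cancel [OF V] by simp
    ultimately show "x \<in> (\<lambda>w. x0 + V *v w) ` ellipsoid c D"
      by blast
  qed
  then have "C \<subseteq> ellipsoid (x0 + V *v c) (V ** D)"
    by (simp add: affine_image_ellipsoid)
  moreover have "invertible (V ** D)"
    using V D by (simp add: invertible_mult)
  moreover have "\<bar>det (V ** D)\<bar> < \<bar>det V\<bar>"
    using D V by (simp add: det_mul abs_mult invertible_det_nz)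
  ultimately show ?thesis
    using that by blast
qed

lemma mvee_small_offset_mem:
  fixes C :: "(real^'n) set"
  assumes conv: "convex C" and comp: "compact C" and mvee: "is_mvee C x0 V"
    and z: "norm z \<le> 3 / (4 * real CARD('n))"
  shows "x0 + V *v z \<in> C"
proof (rule ccontr)
  assume out: "x0 + V *v z \<notin> C"
  have V: "invertible V" and CV: "C \<subseteq> ellipsoid x0 V"
    using mvee by (auto simp: is_mvee_def)
  define S where "S = (*v) (matrix_inv V) ` (\<lambda>x. x - x0) ` C"
  have "convex S" "compact S"
    unfolding S_def using conv comp
    by (auto intro!: convex_linear_image compact_continuous_image convex_translation_subtract
        compact_translation_subtract matrix_vector_mul_linear matrix_vector_mult_linear_continuous_on)
  moreover have "z \<notin> S"
    using out matrix_inv_cancel [OF V] by (auto simp: S_def)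
  ultimately obtain u where u: "norm u = 1" "\<And>w. w \<in> S \<Longrightarrow> u \<bullet> w < u \<bullet> z"
    using separating_unit_vector compact_imp_closed by metis
  have "u \<bullet> z \<le> 3 / (4 * real CARD('n))"
    using norm_cauchy_schwarz [of u z] u z by simp
  then have "u \<bullet> (matrix_inv V *v (x - x0)) \<le> 3 / (4 * real CARD('n))" if "x \<in> C" for x
    using u(2) [of "matrix_inv V *v (x - x0)"] that by (force simp: S_def)
  then obtain x1 W where "invertible W" "C \<subseteq> ellipsoid x1 W" "\<bar>det W\<bar> < \<bar>det V\<bar>"
    using smaller_ellipsoid_if_cap [OF V CV u(1)] by blast
  then show False
    using mvee by (force simp: is_mvee_def measure_ellipsoid_le_iff)
qed

lemma continuous_on_det [continuous_intros]:
  "continuous_on S f \<Longrightarrow> continuous_on S (\<lambda>x. det (f x :: real^'n^'n))"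
  unfolding det_def by (intro continuous_intros)

lemma continuous_on_matrix_vector_mult [continuous_intros]:
  fixes f :: "'a::topological_space \<Rightarrow> real^'n^'m"
  shows "continuous_on S f \<Longrightarrow> continuous_on S g \<Longrightarrow> continuous_on S (\<lambda>x. f x *v g x)"
  unfolding matrix_vector_mult_def by (intro continuous_intros)

lemma norm_matrix_le_onorm:
  fixes A :: "real^'n^'m"
  shows "norm A \<le> real CARD('m) * real CARD('n) * onorm ((*v) A)"
proof -
  have "norm A \<le> (\<Sum>i\<in>UNIV. norm (A $ i))"
    unfolding norm_vec_def by (rule L2_set_le_sum) auto
  also have "\<dots> \<le> (\<Sum>i\<in>UNIV. \<Sum>j\<in>UNIV. \<bar>A $ i $ j\<bar>)"
    by (intro sum_mono norm_le_l1_cart)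
  also have "\<dots> \<le> (\<Sum>i\<in>(UNIV::'m set). \<Sum>j\<in>(UNIV::'n set). onorm ((*v) A))"
    by (intro sum_mono matrix_component_le_onorm)
  finally show ?thesis
    by simp
qed

text \<open>A pair \<open>(x0, P)\<close> stands for the ellipsoid \<open>{y. norm (P *v (y - x0)) \<le> 1}\<close>, i.e.
  \<open>ellipsoid x0 (matrix_inv P)\<close>, whose volume is inversely proportional to \<open>\<bar>det P\<bar>\<close>.\<close>

definition enclosing_ellipsoid_params :: "(real^'n) set \<Rightarrow> real \<Rightarrow> ((real^'n) \<times> (real^'n^'n)) set" where
  "enclosing_ellipsoid_params C \<delta> = {(x0, P). (\<forall>y\<in>C. norm (P *v (y - x0)) \<le> 1) \<and> \<delta> \<le> \<bar>det P\<bar>}"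

lemma norm_matrix_le_if_encloses_ball:
  fixes P :: "real^'n^'n"
  assumes "cball p r \<subseteq> C" "r > 0" and enc: "\<forall>y\<in>C. norm (P *v (y - x0)) \<le> 1"
  shows "norm P \<le> real CARD('n) * real CARD('n) * (2 / r)"
proof -
  have "onorm ((*v) P) \<le> 2 / r"
  proof (rule onorm_le)
    fix v :: "real^'n"
    show "norm (P *v v) \<le> 2 / r * norm v"
    proof (cases "v = 0")
      case False
      define v' where "v' = (r / norm v) *\<^sub>R v"
      have "p + v' \<in> C" "p \<in> C"
        using assms(1,2) False by (auto simp: v'_def dist_norm)
      then have "norm (P *v (p + v' - x0)) \<le> 1" "norm (P *v (p - x0)) \<le> 1"
        using enc by blast+
      then have "norm (P *v (p + v' - x0) - P *v (p - x0)) \<le> 2"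
        using norm_triangle_ineq4 [of "P *v (p + v' - x0)" "P *v (p - x0)"] by linarith
      then have "(r / norm v) * norm (P *v v) \<le> 2"
        using assms(2) by (simp add: v'_def matrix_vector_mult_diff_distrib [symmetric]
            matrix_vector_mult_scaleR)
      then show ?thesis
        using assms(2) False by (simp add: field_simps)
    qed simp
  qed
  then have "real CARD('n) * real CARD('n) * onorm ((*v) P) \<le> real CARD('n) * real CARD('n) * (2 / r)"
    by (intro mult_left_mono) auto
  then show ?thesis
    using norm_matrix_le_onorm [of P] by linarith
qed

lemma compact_matrices_det_ge:
  "compact {P :: real^'n^'n. norm P \<le> B \<and> \<delta> \<le> \<bar>det P\<bar>}"
proof -
  have "closed {P :: real^'n^'n. norm P \<le> B \<and> \<delta> \<le> \<bar>det P\<bar>}"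
    by (intro closed_Collect_conj closed_Collect_le continuous_intros)
  moreover have "bounded {P :: real^'n^'n. norm P \<le> B \<and> \<delta> \<le> \<bar>det P\<bar>}"
    unfolding bounded_iff by blast
  ultimately show ?thesis
    by (simp add: compact_eq_bounded_closed)
qed

lemma matrix_vector_mult_uniform_lower_bound:
  assumes "\<delta> > 0"
  obtains m where "m > 0"
    and "\<And>P v. norm (P :: real^'n^'n) \<le> B \<Longrightarrow> \<delta> \<le> \<bar>det P\<bar> \<Longrightarrow> m * norm v \<le> norm (P *v v)"
proof -
  define K where "K = {P :: real^'n^'n. norm P \<le> B \<and> \<delta> \<le> \<bar>det P\<bar>} \<times> sphere (0::real^'n) 1"
  have "compact K"
    unfolding K_def by (intro compact_Times compact_matrices_det_ge compact_sphere)
  show ?thesis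
  proof (cases "K = {}")
    case True
    then have "norm P \<le> B \<Longrightarrow> \<delta> \<le> \<bar>det P\<bar> \<Longrightarrow> False" for P :: "real^'n^'n"
      using vector_choose_size [of 1] by (auto simp: K_def)
    then show ?thesis
      using that [of 1] by fastforce
  next
    case False
    have "continuous_on K (\<lambda>k. norm (fst k *v snd k))"
      by (intro continuous_intros)
    from continuous_attains_inf [OF \<open>compact K\<close> False this]
    obtain k where k: "k \<in> K" and kmin: "\<And>k'. k' \<in> K \<Longrightarrow> norm (fst k *v snd k) \<le> norm (fst k' *v snd k')"
      by blast
    have "invertible (fst k)" "snd k \<noteq> 0"
      using k \<open>\<delta> > 0\<close> by (auto simp: K_def invertible_det_nz)
    then have "fst k *v snd k \<noteq> 0"
      using matrix_inv_cancel(2) [of "fst k" "snd k"] by auto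
    moreover have "norm (fst k *v snd k) * norm v \<le> norm (P *v v)"
      if "norm P \<le> B" "\<delta> \<le> \<bar>det P\<bar>" for P :: "real^'n^'n" and v :: "real^'n"
    proof (cases "v = 0")
      case False
      then have "norm (fst k *v snd k) \<le> norm (P *v ((1 / norm v) *\<^sub>R v))"
        using kmin [of "(P, (1 / norm v) *\<^sub>R v)"] that by (simp add: K_def)
      then show ?thesis
        using False by (simp add: matrix_vector_mult_scaleR field_simps)
    qed simp
    ultimately show ?thesis
      using that [of "norm (fst k *v snd k)"] by simp
  qed
qed

lemma compact_enclosing_ellipsoid_params:
  fixes C :: "(real^'n) set"
  assumes "interior C \<noteq> {}" "\<delta> > 0"
  shows "compact (enclosing_ellipsoid_params C \<delta>)"
proof -
  let ?F = "enclosing_ellipsoid_params C \<delta>"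
  obtain p r where r: "r > 0" "cball p r \<subseteq> C"
    using assms(1) mem_interior_cball by blast
  define B where "B = real CARD('n) * real CARD('n) * (2 / r)"
  have P_bound: "norm P \<le> B" if "(x0, P) \<in> ?F" for x0 P
    using that unfolding B_def
    by (intro norm_matrix_le_if_encloses_ball [OF r(2,1), where ?x0.0 = x0])
      (simp add: enclosing_ellipsoid_params_def)
  obtain m where m: "m > 0"
    and lower: "\<And>P v. norm (P :: real^'n^'n) \<le> B \<Longrightarrow> \<delta> \<le> \<bar>det P\<bar> \<Longrightarrow> m * norm v \<le> norm (P *v v)"
    using matrix_vector_mult_uniform_lower_bound [OF assms(2)] by blast
  have x0_bound: "norm x0 \<le> norm p + 1 / m" if "(x0, P) \<in> ?F" for x0 P
  proof -
    have "p \<in> C"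
      using r by auto
    then have "norm (P *v (p - x0)) \<le> 1" "\<delta> \<le> \<bar>det P\<bar>"
      using that by (auto simp: enclosing_ellipsoid_params_def)
    then have "m * norm (p - x0) \<le> 1"
      using P_bound [OF that] lower [of P "p - x0"] by linarith
    then have "norm (p - x0) \<le> 1 / m"
      using m by (simp add: field_simps)
    then show ?thesis
      using norm_triangle_ineq3 [of x0 p] by (simp add: norm_minus_commute)
  qed
  have "?F = (\<Inter>y\<in>C. {z. norm (snd z *v (y - fst z)) \<le> 1}) \<inter> {z. \<delta> \<le> \<bar>det (snd z)\<bar>}"
    by (auto simp: enclosing_ellipsoid_params_def)
  moreover have "closed \<dots>"
    by (intro closed_Int closed_INT ballI closed_Collect_le continuous_intros)
  moreover have "?F \<subseteq> cball 0 (norm p + 1 / m) \<times> cball 0 B"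
    using x0_bound P_bound by auto
  then have "bounded ?F"
    using bounded_subset bounded_Times bounded_cball by metis
  ultimately show ?thesis
    by (simp add: compact_eq_bounded_closed)
qed

lemma mvee_of_max_det:
  fixes C :: "(real^'n) set"
  assumes "\<delta> > 0" and opt: "(x0, P) \<in> enclosing_ellipsoid_params C \<delta>"
    and max: "\<And>x1 P1. (x1, P1) \<in> enclosing_ellipsoid_params C \<delta> \<Longrightarrow> \<bar>det P1\<bar> \<le> \<bar>det P\<bar>"
  shows "is_mvee C x0 (matrix_inv P)"
  unfolding is_mvee_def
proof (intro conjI allI impI)
  have P: "invertible P" "\<delta> \<le> \<bar>det P\<bar>"
    using opt assms(1) by (auto simp: enclosing_ellipsoid_params_def invertible_det_nz)
  show V: "invertible (matrix_inv P)"
    using P(1) by (rule invertible_matrix_inv)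
  show "C \<subseteq> ellipsoid x0 (matrix_inv P)"
    using opt by (auto simp: mem_ellipsoid_iff [OF V] matrix_inv_matrix_inv [OF P(1)]
        enclosing_ellipsoid_params_def)
  fix x1 W
  assume W: "invertible W \<and> C \<subseteq> ellipsoid x1 W"
  then have "\<forall>y\<in>C. norm (matrix_inv W *v (y - x1)) \<le> 1"
    by (auto simp: mem_ellipsoid_iff)
  then have "\<bar>det (matrix_inv W)\<bar> \<le> \<bar>det P\<bar>"
    using max [of x1 "matrix_inv W"] P(2) by (force simp: enclosing_ellipsoid_params_def)
  moreover have "0 < \<bar>det (matrix_inv W)\<bar>"
    using W invertible_matrix_inv by (auto simp: invertible_det_nz)
  ultimately have "\<bar>det (matrix_inv P)\<bar> \<le> \<bar>det W\<bar>"
    using W P(1) by (auto simp: det_matrix_inv abs_divide invertible_det_nz field_simps)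
  then show "measure lebesgue (ellipsoid x0 (matrix_inv P)) \<le> measure lebesgue (ellipsoid x1 W)"
    by (simp add: measure_ellipsoid_le_iff)
qed

lemma mvee_exists:
  fixes C :: "(real^'n) set"
  assumes "compact C" "interior C \<noteq> {}"
  shows "\<exists>x0 V. is_mvee C x0 V"
proof -
  obtain R where R: "R > 0" "\<And>x. x \<in> C \<Longrightarrow> norm x \<le> R"
    using compact_imp_bounded [OF assms(1)] bounded_pos by blast
  define \<delta> where "\<delta> = (1 / R) ^ CARD('n)"
  let ?F = "enclosing_ellipsoid_params C \<delta>"
  have \<delta>: "\<delta> > 0"
    using R by (simp add: \<delta>_def)
  have "det ((1 / R) *\<^sub>R mat 1 :: real^'n^'n) = \<delta>"
    by (simp add: \<delta>_def det_diagonal mat_def)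
  moreover have "norm (((1 / R) *\<^sub>R mat 1 :: real^'n^'n) *v (y - 0)) \<le> 1" if "y \<in> C" for y
    using R(1) R(2) [OF that] by (simp add: scaleR_matrix_vector_assoc [symmetric] field_simps)
  ultimately have "(0, (1 / R) *\<^sub>R mat 1) \<in> ?F"
    using \<delta> by (auto simp: enclosing_ellipsoid_params_def)
  then have "?F \<noteq> {}"
    by blast
  moreover have "continuous_on ?F (\<lambda>z. \<bar>det (snd z)\<bar>)"
    by (intro continuous_intros)
  ultimately obtain z where "z \<in> ?F" "\<And>z'. z' \<in> ?F \<Longrightarrow> \<bar>det (snd z')\<bar> \<le> \<bar>det (snd z)\<bar>"
    using continuous_attains_sup [OF compact_enclosing_ellipsoid_params [OF assms(2) \<delta>]] by blast
  then show ?thesis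
    using mvee_of_max_det [OF \<delta>, of "fst z" "snd z" C] by force
qed

section \<open>The Minkowski distance as a gauge\<close>

definition john_gauge :: "(real^'n) set \<Rightarrow> real^'n \<Rightarrow> real" where
  "john_gauge C v = real CARD('n) * norm (matrix_inv (john_matrix C) *v v)"

lemma mink_dist_eq_john_gauge: "mink_dist x C = john_gauge C (x - john_center C)"
  by (simp add: mink_dist_def john_gauge_def)

lemma john_gauge_scaleR: "john_gauge C (r *\<^sub>R v) = \<bar>r\<bar> * john_gauge C v"
  by (simp add: john_gauge_def matrix_vector_mult_scaleR)

lemma john_gauge_minus: "john_gauge C (- v) = john_gauge C v"
  using john_gauge_scaleR [of C "-1" v] by simp

lemma john_gauge_triangle: "john_gauge C (v + w) \<le> john_gauge C v + john_gauge C w"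
  using norm_triangle_ineq [of "matrix_inv (john_matrix C) *v v" "matrix_inv (john_matrix C) *v w"]
  by (simp add: john_gauge_def matrix_vector_right_distrib flip: distrib_left)

lemma john_gauge_convex_comb:
  assumes "0 \<le> a" "0 \<le> b"
  shows "john_gauge C (a *\<^sub>R v + b *\<^sub>R w) \<le> a * john_gauge C v + b * john_gauge C w"
  using john_gauge_triangle [of C "a *\<^sub>R v" "b *\<^sub>R w"] assms by (simp add: john_gauge_scaleR)

lemma convex_scaled_set: "convex (scaled_set b C)" for C :: "(real^'n) set"
proof (rule convexI)
  fix x y :: "real^'n" and u v :: real
  assume xy: "x \<in> scaled_set b C" "y \<in> scaled_set b C" and uv: "0 \<le> u" "0 \<le> v" "u + v = 1"
  have "u *\<^sub>R x + v *\<^sub>R y - john_center C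
      = u *\<^sub>R (x - john_center C) + v *\<^sub>R (y - john_center C)"
    using uv by (simp add: algebra_simps flip: scaleR_add_left)
  then have "mink_dist (u *\<^sub>R x + v *\<^sub>R y) C \<le> u * mink_dist x C + v * mink_dist y C"
    using john_gauge_convex_comb [OF uv(1,2)] by (simp add: mink_dist_eq_john_gauge)
  also have "\<dots> \<le> u * b + v * b"
    using xy uv by (intro add_mono mult_left_mono) (auto simp: scaled_set_def)
  finally show "u *\<^sub>R x + v *\<^sub>R y \<in> scaled_set b C"
    using uv by (simp add: scaled_set_def flip: distrib_right)
qed

lemma closed_scaled_set: "closed (scaled_set b C)"
  unfolding scaled_set_def mink_dist_def by (intro closed_Collect_le continuous_intros)

lemma is_mvee_john:
  assumes "compact C" "interior C \<noteq> {}"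
  shows "is_mvee C (john_center C) (john_matrix C)"
proof -
  have "\<exists>p. is_mvee C (fst p) (snd p)"
    using mvee_exists [OF assms] by auto
  then show ?thesis
    unfolding john_center_def john_matrix_def by (rule someI_ex)
qed

lemma mink_dist_le_card:
  fixes C :: "(real^'n) set"
  assumes "compact C" "interior C \<noteq> {}" "y \<in> C"
  shows "mink_dist y C \<le> real CARD('n)"
proof -
  have "norm (matrix_inv (john_matrix C) *v (y - john_center C)) \<le> 1"
    using is_mvee_john [OF assms(1,2)] assms(3)
    by (auto simp: is_mvee_def mem_ellipsoid_iff)
  then show ?thesis
    by (simp add: mink_dist_def mult_left_le)
qed

lemma mem_if_mink_dist_le:
  fixes C :: "(real^'n) set"
  assumes "convex C" "compact C" "interior C \<noteq> {}" "mink_dist y C \<le> 3/4"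
  shows "y \<in> C"
proof -
  have mvee: "is_mvee C (john_center C) (john_matrix C)"
    using is_mvee_john [OF assms(2,3)] .
  define z where "z = matrix_inv (john_matrix C) *v (y - john_center C)"
  have "norm z \<le> 3 / (4 * real CARD('n))"
    using assms(4) by (simp add: mink_dist_def z_def field_simps)
  then have "john_center C + john_matrix C *v z \<in> C"
    by (rule mvee_small_offset_mem [OF assms(1,2) mvee])
  moreover have "john_center C + john_matrix C *v z = y"
    using mvee by (simp add: z_def is_mvee_def matrix_inv_cancel)
  ultimately show ?thesis
    by simp
qed

section \<open>Grid points\<close>

lemma lattice_point_near:
  fixes p :: "real^'n"
  obtains z where "z \<in> int_lattice" "norm (z - p) \<le> sqrt (real CARD('n)) / 2"
proof
  show "(\<chi> i. of_int (round (p $ i))) \<in> int_lattice"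
    by (simp add: int_lattice_def)
  have "norm ((\<chi> i. of_int (round (p $ i))) - p) \<le> L2_set (\<lambda>i. 1/2) (UNIV::'n set)"
    unfolding norm_vec_def
  proof (rule L2_set_mono)
    show "norm (((\<chi> i. of_int (round (p $ i))) - p) $ i) \<le> 1/2" for i
      using of_int_round_abs_le [of "p $ i"] by simp
  qed auto
  also have "\<dots> = sqrt (real CARD('n)) / 2"
    by (simp add: L2_set_def real_sqrt_mult real_sqrt_divide power2_eq_square)
  finally show "norm ((\<chi> i. of_int (round (p $ i))) - p) \<le> sqrt (real CARD('n)) / 2" .
qed

lemma john_gauge_mvee_le:
  fixes C K :: "(real^'n) set"
  assumes "convex C" "compact C" "is_mvee C x0 V" "C \<subseteq> scaled_set \<beta> K"
    and "norm z \<le> 3 / (4 * real CARD('n))"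
  shows "john_gauge K (V *v z) \<le> \<beta>"
proof -
  have "V *v (- z) = - (V *v z)"
    using matrix_vector_mult_scaleR [of V "-1" z] by simp
  then have "x0 + V *v z \<in> C" "x0 - V *v z \<in> C"
    using mvee_small_offset_mem [OF assms(1-3), of z] mvee_small_offset_mem [OF assms(1-3), of "- z"]
      assms(5) by auto
  then have "john_gauge K (x0 + V *v z - john_center K) \<le> \<beta>"
    "john_gauge K (x0 - V *v z - john_center K) \<le> \<beta>"
    using assms(4) by (auto simp: scaled_set_def mink_dist_eq_john_gauge)
  moreover have "2 *\<^sub>R (V *v z) = (x0 + V *v z - john_center K) + - (x0 - V *v z - john_center K)"
    by (simp add: algebra_simps scaleR_2)
  then have "john_gauge K (2 *\<^sub>R (V *v z))
      \<le> john_gauge K (x0 + V *v z - john_center K) + john_gauge K (- (x0 - V *v z - john_center K))"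
    by (metis john_gauge_triangle)
  ultimately show ?thesis
    using john_gauge_minus [of K "x0 - V *v z - john_center K"] john_gauge_scaleR [of K 2 "V *v z"]
    by linarith
qed

lemma inverse_image_of_ball_difference:
  fixes M E :: "real^'n^'n"
  assumes M: "invertible M" and img: "(\<lambda>y. M *v y + c) ` ellipsoid x0 E = cball 0 \<alpha>"
    and w: "norm w \<le> \<alpha>"
  obtains z1 z2 where "norm z1 \<le> 1" "norm z2 \<le> 1" "2 *\<^sub>R (matrix_inv M *v w) = E *v (z1 - z2)"
proof -
  have "w \<in> cball 0 \<alpha>" "- w \<in> cball 0 \<alpha>"
    using w by auto
  then obtain e1 e2 where "e1 \<in> ellipsoid x0 E" "M *v e1 + c = w" "e2 \<in> ellipsoid x0 E" "M *v e2 + c = - w"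
    unfolding img [symmetric] by (metis (no_types, lifting) imageE)
  then obtain z1 z2 where z: "norm z1 \<le> 1" "norm z2 \<le> 1"
    and e: "M *v (x0 + E *v z1) + c = w" "M *v (x0 + E *v z2) + c = - w"
    unfolding ellipsoid_def by blast
  have "M *v (E *v (z1 - z2)) = M *v (x0 + E *v z1) - M *v (x0 + E *v z2)"
    by (simp add: matrix_vector_mult_diff_distrib matrix_vector_right_distrib)
  also have "\<dots> = (w - c) - (- w - c)"
    using e by (metis add_diff_cancel_right')
  also have "\<dots> = 2 *\<^sub>R w"
    by (simp add: scaleR_2)
  finally have "2 *\<^sub>R (matrix_inv M *v w) = E *v (z1 - z2)"
    using matrix_inv_cancel(2) [OF M, of "E *v (z1 - z2)"] by (simp add: matrix_vector_mult_scaleR)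
  with z show ?thesis
    using that by blast
qed

lemma grid_map_inverse_bound:
  fixes C K :: "(real^'n) set" and M :: "real^'n^'n"
  assumes C: "convex C" "compact C" "is_mvee C x0 V" "C \<subseteq> scaled_set \<beta> K"
    and M: "invertible M"
    and img: "(\<lambda>y. M *v y + c) ` ellipsoid x0 ((1 / real CARD('n)) *\<^sub>R V) = cball 0 \<alpha>"
    and w: "norm w \<le> \<alpha>"
  shows "john_gauge K (matrix_inv M *v w) \<le> 4 * \<beta> / 3"
proof -
  define d where "d = real CARD('n)"
  have d: "d \<ge> 1"
    by (simp add: d_def Suc_le_eq)
  obtain z1 z2 where z: "norm z1 \<le> 1" "norm z2 \<le> 1"
    and diff: "2 *\<^sub>R (matrix_inv M *v w) = ((1 / d) *\<^sub>R V) *v (z1 - z2)"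
    using inverse_image_of_ball_difference [OF M img w] unfolding d_def by blast
  note diff
  also have "\<dots> = (8/3) *\<^sub>R (V *v ((3 / (8 * d)) *\<^sub>R (z1 - z2)))"
    by (simp add: matrix_vector_mult_scaleR scaleR_matrix_vector_assoc [symmetric])
  finally have "john_gauge K (2 *\<^sub>R (matrix_inv M *v w))
      = john_gauge K ((8/3) *\<^sub>R (V *v ((3 / (8 * d)) *\<^sub>R (z1 - z2))))"
    by (rule arg_cong)
  then have "2 * john_gauge K (matrix_inv M *v w) = (8/3) * john_gauge K (V *v ((3 / (8 * d)) *\<^sub>R (z1 - z2)))"
    by (simp only: john_gauge_scaleR)
  moreover have "norm ((3 / (8 * d)) *\<^sub>R (z1 - z2)) \<le> 3 / (4 * d)"
  proof -
    have "norm ((3 / (8 * d)) *\<^sub>R (z1 - z2)) = 3 / (8 * d) * norm (z1 - z2)"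
      using d by (simp only: norm_scaleR) simp
    also have "\<dots> \<le> 3 / (8 * d) * 2"
      using z norm_triangle_ineq4 [of z1 z2] d by (intro mult_left_mono) auto
    finally show ?thesis
      by simp
  qed
  ultimately show ?thesis
    using john_gauge_mvee_le [OF C, of "(3 / (8 * d)) *\<^sub>R (z1 - z2)"] by (simp add: d_def)
qed

lemma grid_approximation:
  fixes C K :: "(real^'n) set"
  assumes "is_grid C \<alpha> G" "convex C" "compact C" "C \<subseteq> scaled_set \<beta> K" "\<alpha> > 0" "\<beta> \<ge> 0"
  shows "\<exists>y. (y \<in> C \<longrightarrow> y \<in> G) \<and> john_gauge K (y - q) \<le> 2 * \<beta> * sqrt (real CARD('n)) / (3 * \<alpha>)"
proof -
  obtain x0 c :: "real^'n" and V M :: "real^'n^'n" where mvee: "is_mvee C x0 V" and M: "invertible M"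
    and img: "(\<lambda>y. M *v y + c) ` ellipsoid x0 ((1 / real CARD('n)) *\<^sub>R V) = cball 0 \<alpha>"
    and G: "G = {y \<in> C. M *v y + c \<in> int_lattice}"
    using assms(1) unfolding is_grid_def by blast
  have lip: "john_gauge K (matrix_inv M *v w) \<le> 4 * \<beta> / (3 * \<alpha>) * norm w" for w
  proof (cases "w = 0")
    case False
    have "john_gauge K (matrix_inv M *v ((\<alpha> / norm w) *\<^sub>R w)) \<le> 4 * \<beta> / 3"
      using grid_map_inverse_bound [OF assms(2,3) mvee assms(4) M img] False assms(5) by simp
    then show ?thesis
      using False assms(5) by (simp add: matrix_vector_mult_scaleR john_gauge_scaleR field_simps)
  qed (simp add: john_gauge_def)
  obtain z where z: "z \<in> int_lattice" "norm (z - (M *v q + c)) \<le> sqrt (real CARD('n)) / 2"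
    using lattice_point_near by blast
  define y where "y = matrix_inv M *v (z - c)"
  have "M *v y + c = z"
    using matrix_inv_cancel [OF M] by (simp add: y_def)
  then have "y \<in> C \<longrightarrow> y \<in> G"
    using z(1) G by simp
  have "y - q = matrix_inv M *v (z - (M *v q + c))"
    using matrix_inv_cancel [OF M] by (simp add: y_def matrix_vector_mult_diff_distrib algebra_simps)
  then have "john_gauge K (y - q) \<le> 4 * \<beta> / (3 * \<alpha>) * norm (z - (M *v q + c))"
    using lip by simp
  also have "\<dots> \<le> 4 * \<beta> / (3 * \<alpha>) * (sqrt (real CARD('n)) / 2)"
    using z(2) assms(5,6) by (intro mult_left_mono) auto
  finally have "john_gauge K (y - q) \<le> 2 * \<beta> * sqrt (real CARD('n)) / (3 * \<alpha>)"
    by simp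
  with \<open>y \<in> C \<longrightarrow> y \<in> G\<close> show ?thesis
    by blast
qed

lemma homothety_identities:
  fixes x y s0 :: "'a::real_vector"
  assumes "t \<ge> 0"
  shows "y + t *\<^sub>R (y - x) - s0 = (1 + t) *\<^sub>R (y - (1 / (1 + t)) *\<^sub>R (s0 + t *\<^sub>R x))"
    and "y = (1 / (1 + t)) *\<^sub>R (y + t *\<^sub>R (y - x)) + (t / (1 + t)) *\<^sub>R x"
proof -
  have "(1 + t) *\<^sub>R ((1 / (1 + t)) *\<^sub>R (s0 + t *\<^sub>R x)) = s0 + t *\<^sub>R x"
    using assms by simp
  then show "y + t *\<^sub>R (y - x) - s0 = (1 + t) *\<^sub>R (y - (1 / (1 + t)) *\<^sub>R (s0 + t *\<^sub>R x))"
    by (simp add: scaleR_right_diff_distrib algebra_simps)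
  have "(1 / (1 + t)) *\<^sub>R (y + t *\<^sub>R (y - x)) + (t / (1 + t)) *\<^sub>R x = (1 / (1 + t)) *\<^sub>R ((1 + t) *\<^sub>R y)"
    by (simp add: algebra_simps divide_inverse)
  also have "\<dots> = y"
    using assms by simp
  finally show "y = (1 / (1 + t)) *\<^sub>R (y + t *\<^sub>R (y - x)) + (t / (1 + t)) *\<^sub>R x"
    by simp
qed

lemma grid_homothety_step:
  fixes K K' G :: "(real^'n) set"
  assumes K': "convex K'" "compact K'" "interior K' \<noteq> {}" "K' \<subseteq> K"
    and K: "convex K" "x \<in> K"
    and approx: "\<And>q. \<exists>y. (y \<in> scaled_set \<beta> K' \<inter> K \<longrightarrow> y \<in> G) \<and> john_gauge K' (y - q) \<le> \<rho>"
    and \<beta>: "\<beta> \<ge> 2/3" and t: "t \<ge> 0" and \<kappa>: "0 \<le> \<kappa>" "\<kappa> \<le> t"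
    and target: "(1 + t) * \<rho> + \<kappa> * mink_dist x K' \<le> 1 / (2 * \<beta>)"
    and inside: "(1 + t) * \<rho> + (t - \<kappa>) * mink_dist x K' \<le> (1 + t) * \<beta>"
  shows "\<exists>xg\<in>G. xg + t *\<^sub>R (xg - x) \<in> scaled_set (1 / (2 * \<beta>)) K'"
proof -
  define c where "c = john_center K'"
  define s0 where "s0 = c - \<kappa> *\<^sub>R (x - c)"
  obtain y where y: "y \<in> scaled_set \<beta> K' \<inter> K \<longrightarrow> y \<in> G"
    and near: "john_gauge K' (y - (1 / (1 + t)) *\<^sub>R (s0 + t *\<^sub>R x)) \<le> \<rho>"
    using approx by blast
  define s where "s = y + t *\<^sub>R (y - x)"
  have "s - s0 = (1 + t) *\<^sub>R (y - (1 / (1 + t)) *\<^sub>R (s0 + t *\<^sub>R x))"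
    unfolding s_def by (rule homothety_identities [OF t])
  then have s_s0: "john_gauge K' (s - s0) \<le> (1 + t) * \<rho>"
    using near t by (simp add: john_gauge_scaleR mult_left_mono)
  have "john_gauge K' (s - c) \<le> john_gauge K' (s - s0) + john_gauge K' (- \<kappa> *\<^sub>R (x - c))"
    using john_gauge_triangle [of K' "s - s0" "- \<kappa> *\<^sub>R (x - c)"] by (simp add: s0_def)
  then have s_mink: "mink_dist s K' \<le> 1 / (2 * \<beta>)"
    using s_s0 target \<kappa> by (simp add: mink_dist_eq_john_gauge john_gauge_minus john_gauge_scaleR c_def)
  moreover have "1 / (2 * \<beta>) \<le> 3/4"
    using \<beta> by (simp add: field_simps)
  ultimately have "s \<in> K'"
    by (intro mem_if_mink_dist_le [OF K'(1-3)]) linarith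
  have y_eq: "y = (1 / (1 + t)) *\<^sub>R s + (t / (1 + t)) *\<^sub>R x"
    unfolding s_def by (rule homothety_identities [OF t])
  have "y \<in> K"
    unfolding y_eq using \<open>s \<in> K'\<close> K' K t
    by (intro convexD [OF K(1)]) (auto simp: add_divide_distrib [symmetric])
  have "(1 + t) * john_gauge K' (y - c) = john_gauge K' ((1 + t) *\<^sub>R (y - c))"
    using t by (simp add: john_gauge_scaleR)
  also have "(1 + t) *\<^sub>R (y - c) = (s - s0) + (t - \<kappa>) *\<^sub>R (x - c)"
    by (simp add: s_def s0_def algebra_simps)
  also have "john_gauge K' \<dots> \<le> john_gauge K' (s - s0) + (t - \<kappa>) * mink_dist x K'"
    using john_gauge_triangle [of K' "s - s0" "(t - \<kappa>) *\<^sub>R (x - c)"] \<kappa>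
    by (simp add: john_gauge_scaleR mink_dist_eq_john_gauge c_def)
  finally have "(1 + t) * john_gauge K' (y - c) \<le> (1 + t) * \<rho> + (t - \<kappa>) * mink_dist x K'"
    using s_s0 by linarith
  with inside have "(1 + t) * mink_dist y K' \<le> (1 + t) * \<beta>"
    by (simp add: mink_dist_eq_john_gauge c_def)
  with t have "mink_dist y K' \<le> \<beta>"
    by (simp add: mult_le_cancel_left_pos)
  with y \<open>y \<in> K\<close> have "y \<in> G"
    by (simp add: scaled_set_def)
  moreover have "y + t *\<^sub>R (y - x) \<in> scaled_set (1 / (2 * \<beta>)) K'"
    using s_mink by (simp add: scaled_set_def s_def)
  ultimately show ?thesis
    by blast
qed

lemma grid_step_inside:
  fixes K K' G :: "(real^'n) set"
  assumes K': "convex K'" "compact K'" "interior K' \<noteq> {}" "K' \<subseteq> K" and "convex K"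
    and approx: "\<And>q. \<exists>y. (y \<in> scaled_set \<beta> K' \<inter> K \<longrightarrow> y \<in> G)
      \<and> john_gauge K' (y - q) \<le> 1 / (3 * \<beta> * (\<gamma> + 1))"
    and "\<gamma> > 1" "\<beta> > \<gamma>" "\<beta> \<ge> real CARD('n)" and x: "x \<in> K'"
  shows "\<exists>xg\<in>G. xg + \<gamma> *\<^sub>R (xg - x) \<in> scaled_set (1 / (2 * \<beta>)) K'"
proof (rule grid_homothety_step [OF K' \<open>convex K\<close> _ approx, where \<kappa> = 0])
  have \<beta>: "\<beta> > 1"
    using assms(7,8) by linarith
  have "\<gamma> + 1 \<noteq> 0"
    using assms(7) by linarith
  then have \<rho>: "(1 + \<gamma>) * (1 / (3 * \<beta> * (\<gamma> + 1))) = 1 / (3 * \<beta>)"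
    by (simp add: add.commute)
  show "(1 + \<gamma>) * (1 / (3 * \<beta> * (\<gamma> + 1))) + 0 * mink_dist x K' \<le> 1 / (2 * \<beta>)"
    unfolding \<rho> using \<beta> by (simp add: field_simps)
  have "1 * 1 \<le> \<beta> * (\<beta> * 3)"
    using \<beta> by (intro mult_mono) auto
  then have "1 / (3 * \<beta>) \<le> \<beta>"
    using \<beta> by (simp add: field_simps)
  moreover have "mink_dist x K' \<le> \<beta>"
    using mink_dist_le_card [OF K'(2,3) x] assms(9) by linarith
  then have "\<gamma> * mink_dist x K' \<le> \<gamma> * \<beta>"
    using assms(7) by (intro mult_left_mono) auto
  ultimately show "(1 + \<gamma>) * (1 / (3 * \<beta> * (\<gamma> + 1))) + (\<gamma> - 0) * mink_dist x K' \<le> (1 + \<gamma>) * \<beta>"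
    unfolding \<rho> by (simp add: algebra_simps)
qed (use x K' assms(7,8) in auto)

lemma grid_step_outside:
  fixes K K' G :: "(real^'n) set"
  assumes K': "convex K'" "compact K'" "interior K' \<noteq> {}" "K' \<subseteq> K" and "convex K"
    and approx: "\<And>q. \<exists>y. (y \<in> scaled_set \<beta> K' \<inter> K \<longrightarrow> y \<in> G)
      \<and> john_gauge K' (y - q) \<le> 1 / (3 * \<beta> * (\<gamma> + 1))"
    and \<gamma>: "\<gamma> > 1" and "\<beta> > \<gamma>" and x: "x \<in> K - K'"
  shows "\<exists>xg\<in>G. xg + (\<gamma> / mink_dist x K') *\<^sub>R (xg - x) \<in> scaled_set (1 / (2 * \<beta>)) K'"
proof -
  define \<rho> m t where "\<rho> = 1 / (3 * \<beta> * (\<gamma> + 1))" and "m = mink_dist x K'" and "t = \<gamma> / m"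
  have \<beta>: "\<beta> > 1"
    using assms(7,8) by linarith
  have "\<gamma> + 1 \<noteq> 0"
    using \<gamma> by linarith
  then have \<rho>_eq: "(\<gamma> + 1) * \<rho> = 1 / (3 * \<beta>)" and "\<rho> \<ge> 0"
    using \<beta> \<gamma> by (simp_all add: \<rho>_def)
  have "m > 3/4"
    using mem_if_mink_dist_le [OF K'(1-3), of x] x by (force simp: m_def)
  then have t: "t > 0" "t * m = \<gamma>" "t \<le> 4/3 * \<gamma>"
    using \<gamma> by (auto simp: t_def field_simps)
  have step: "(1 + t) * \<rho> \<le> 1 / (2 * k * \<beta>)" if "2 * k * (1 + t) \<le> 3 * (\<gamma> + 1)" "k > 0" for k
  proof -
    have "(1 + t) * \<rho> \<le> (3 * (\<gamma> + 1) / (2 * k)) * \<rho>"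
      using that \<open>\<rho> \<ge> 0\<close> by (intro mult_right_mono) (simp_all add: field_simps)
    also have "\<dots> = 3 / (2 * k) * ((\<gamma> + 1) * \<rho>)"
      by simp
    also have "\<dots> = 1 / (2 * k * \<beta>)"
      unfolding \<rho>_eq by simp
    finally show ?thesis .
  qed
  note step_rule = grid_homothety_step [OF K' \<open>convex K\<close> _ approx [folded \<rho>_def, folded m_def]]
  have "x \<in> K"
    using x by simp
  have "\<exists>xg\<in>G. xg + t *\<^sub>R (xg - x) \<in> scaled_set (1 / (2 * \<beta>)) K'"
  proof (cases "m \<le> 2")
    case True
    have target: "(1 + t) * \<rho> \<le> 1 / (2 * \<beta>)"
      using step [of 1] t \<gamma> by simp
    have "1 / 2 * 1 \<le> t * \<beta>"
      using True \<gamma> \<beta> \<open>m > 3/4\<close> by (intro mult_mono) (auto simp: t_def field_simps)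
    moreover have "1 / (2 * \<beta>) \<le> 1 / 2"
      using \<beta> by simp
    ultimately have "(1 + t) * \<rho> + (t - 0) * m \<le> (1 + t) * \<beta>"
      using target t(2) \<open>\<beta> > \<gamma>\<close> by (simp add: algebra_simps)
    with target show ?thesis
      using t \<open>x \<in> K\<close> \<beta> by (intro step_rule [where \<kappa> = 0]) (simp_all add: m_def)
  next
    case False
    define \<kappa> where "\<kappa> = 1 / (4 * \<beta>) / m"
    have \<kappa>: "\<kappa> * m = 1 / (4 * \<beta>)" "0 \<le> \<kappa>"
      using False \<beta> by (simp_all add: \<kappa>_def)
    have "1 * 1 \<le> \<beta> * \<gamma>"
      using \<beta> \<gamma> by (intro mult_mono) auto
    then have "1 / (4 * \<beta>) \<le> \<gamma>"
      using \<beta> by (simp add: field_simps)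
    then have "\<kappa> \<le> t"
      using False unfolding \<kappa>_def t_def by (intro divide_right_mono) auto
    have "t \<le> \<gamma> / 2"
      using False \<gamma> unfolding t_def by (intro divide_left_mono) auto
    then have target: "(1 + t) * \<rho> \<le> 1 / (4 * \<beta>)"
      using step [of 2] \<gamma> by simp
    moreover have "0 \<le> \<beta> * t"
      using t \<beta> by simp
    moreover have "(t - \<kappa>) * m = \<gamma> - 1 / (4 * \<beta>)" "(1 + t) * \<beta> = \<beta> + \<beta> * t"
      using t(2) \<kappa>(1) by (simp_all add: algebra_simps)
    ultimately have "(1 + t) * \<rho> + (t - \<kappa>) * m \<le> (1 + t) * \<beta>"
      using \<open>\<beta> > \<gamma>\<close> by linarith
    with target \<open>\<kappa> \<le> t\<close> show ?thesis
      using t \<kappa> \<open>x \<in> K\<close> \<beta> by (intro step_rule [where \<kappa> = \<kappa>]) (simp_all add: m_def)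
  qed
  then show ?thesis
    by (simp add: t_def m_def)
qed

lemma grid_point_near_in_gauge:
  fixes K K' G :: "(real^'n) set"
  assumes "convex K" "compact K" "\<beta> > 1" "\<gamma> > 1"
    and "\<alpha> \<ge> 2 * (\<gamma> + 1) * \<beta>\<^sup>2 * sqrt (real CARD('n))"
    and "is_grid (scaled_set \<beta> K' \<inter> K) \<alpha> G"
  shows "\<exists>y. (y \<in> scaled_set \<beta> K' \<inter> K \<longrightarrow> y \<in> G) \<and> john_gauge K' (y - q) \<le> 1 / (3 * \<beta> * (\<gamma> + 1))"
proof -
  define r where "r = 3 * \<beta> * (\<gamma> + 1)"
  have "r > 0"
    using assms(3,4) by (simp add: r_def)
  have "0 < 2 * (\<gamma> + 1) * \<beta>\<^sup>2 * sqrt (real CARD('n))"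
    using assms(3,4) by simp
  then have \<alpha>: "\<alpha> > 0"
    using assms(5) by linarith
  have "2 * \<beta> * sqrt (real CARD('n)) * r \<le> 3 * \<alpha>"
    using assms(5) by (simp add: r_def power2_eq_square algebra_simps)
  with \<open>r > 0\<close> \<alpha> have "2 * \<beta> * sqrt (real CARD('n)) / (3 * \<alpha>) \<le> 1 / r"
    by (simp add: field_simps)
  moreover have "convex (scaled_set \<beta> K' \<inter> K)" "compact (scaled_set \<beta> K' \<inter> K)"
    using assms(1,2) by (auto intro: convex_Int convex_scaled_set closed_Int_compact closed_scaled_set)
  then have "\<exists>y. (y \<in> scaled_set \<beta> K' \<inter> K \<longrightarrow> y \<in> G)
      \<and> john_gauge K' (y - q) \<le> 2 * \<beta> * sqrt (real CARD('n)) / (3 * \<alpha>)"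
    using grid_approximation [OF assms(6)] \<alpha> assms(3) by auto
  ultimately show ?thesis
    unfolding r_def by (meson order_trans)
qed

theorem mainTheorem2:
  fixes K K' :: "(real^'n) set" and \<beta> \<gamma> \<alpha> :: real and G :: "(real^'n) set"
  assumes "convex K" "compact K" "interior K \<noteq> {}"
    and "convex K'" "compact K'" "interior K' \<noteq> {}"
    and "K' \<subseteq> K"
    and "\<beta> > \<gamma>" "\<gamma> > 1" "\<beta> > real CARD('n)"
    and "\<alpha> \<ge> 2 * (\<gamma> + 1) * \<beta>\<^sup>2 * sqrt (real CARD('n))"
    and "is_grid (scaled_set \<beta> K' \<inter> K) \<alpha> G"
  shows "(\<forall>x\<in>K'. \<exists>xg\<in>G. xg + \<gamma> *\<^sub>R (xg - x) \<in> scaled_set (1 / (2 * \<beta>)) K')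
       \<and> (\<forall>x\<in>K - K'. \<exists>xg\<in>G.
            xg + (\<gamma> / mink_dist x K') *\<^sub>R (xg - x) \<in> scaled_set (1 / (2 * \<beta>)) K')"
proof -
  have "\<beta> > 1"
    using assms(8,9) by linarith
  then have "\<exists>y. (y \<in> scaled_set \<beta> K' \<inter> K \<longrightarrow> y \<in> G)
      \<and> john_gauge K' (y - q) \<le> 1 / (3 * \<beta> * (\<gamma> + 1))" for q
    using grid_point_near_in_gauge [OF assms(1,2) _ assms(9,11,12)] by blast
  then show ?thesis
    using grid_step_inside [OF assms(4-7,1)] grid_step_outside [OF assms(4-7,1)] assms(8-10)
    by (simp add: less_imp_le)
qed

end
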